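(* Let $A=\{2,3,5,7,11,\dots\}$ be the set of all prime numbers. For every positive integer $n$, $$\sum_{k=1}^{n}N^p_A(k)\big(q^e_A(n-k)-q^o_A(n-k)\big)=\Omega(n),$$ where $\Omega(n)$ denotes the number of distinct prime divisors of $n$.
   Context: For a set $A$ of positive integers, $N^p_A(n)$ is the total number of parts, summed over all partitions of $n$ with parts in $A$. $q^e_A(m)$ (resp. $q^o_A(m)$) is the number of partitions of $m$ into pairwise distinct parts from $A$ with an even (resp. odd) number of parts; $q^e_A(0)=1$, $q^o_A(0)=0$. *)

theory Defs
  imports Main "HOL-Library.Multiset" "HOL-Computational_Algebra.Primes"
begin

definition partitions_in :: "nat set \<Rightarrow> nat \<Rightarrow> nat multiset set" where
  "partitions_in A n = {M. set_mset M \<subseteq> A \<and> sum_mset M = n}"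

definition Np :: "nat set \<Rightarrow> nat \<Rightarrow> nat" where
  "Np A n = (\<Sum>M\<in>partitions_in A n. size M)"

definition distinct_partitions_in :: "nat set \<Rightarrow> nat \<Rightarrow> nat set set" where
  "distinct_partitions_in A m = {S. finite S \<and> S \<subseteq> A \<and> \<Sum>S = m}"

definition qe :: "nat set \<Rightarrow> nat \<Rightarrow> nat" where
  "qe A m = card {S \<in> distinct_partitions_in A m. even (card S)}"

definition qo :: "nat set \<Rightarrow> nat \<Rightarrow> nat" where
  "qo A m = card {S \<in> distinct_partitions_in A m. odd (card S)}"

end

theory Submission
  imports Defs "HOL-Computational_Algebra.Formal_Power_Series"
begin

(* For a finite set B of positive integers the generating functions of partitions and of
   signed distinct partitions are P_B = prod (1 - x^b)^-1 and D_B = prod (1 - x^b), while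
   marking one part gives N_B = P_B * sum x^b / (1 - x^b).  Hence N_B * D_B = sum x^b / (1 - x^b),
   whose n-th coefficient counts the b in B dividing n.  All three identities follow by induction
   on B from the recurrences obtained by sorting partitions according to whether they use a
   new part a (and removing one copy of a if they do).  Partitions of numbers up to n only use
   parts up to n, so an arbitrary A may be replaced by the finite set A \<inter> {..n}. *)

lemma member_le_sum_mset: "x \<in># M \<Longrightarrow> x \<le> sum_mset (M :: nat multiset)"
  by (metis le_add1 sum_mset.remove)

lemma size_le_sum_mset: "0 \<notin># M \<Longrightarrow> size M \<le> sum_mset (M :: nat multiset)"
proof -
  assume "0 \<notin># M"
  then have "(\<Sum>x\<in>#M. 1) \<le> (\<Sum>x\<in>#M. x)"
    by (intro sum_mset_mono) (metis less_one not_le)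
  then show ?thesis by simp
qed

lemma finite_partitions_in: "0 \<notin> A \<Longrightarrow> finite (partitions_in A m)"
proof -
  assume "0 \<notin> A"
  have "M \<in> multisets_of_size {1..m} (size M) \<and> size M \<le> m" if "M \<in> partitions_in A m" for M
  proof -
    have "0 \<notin># M" "sum_mset M = m" "set_mset M \<subseteq> A"
      using that \<open>0 \<notin> A\<close> by (auto simp: partitions_in_def)
    then have "set_mset M \<subseteq> {1..m}"
      using member_le_sum_mset[of _ M] by (auto simp: Suc_le_eq intro: gr0I)
    with \<open>0 \<notin># M\<close> \<open>sum_mset M = m\<close> show ?thesis
      using size_le_sum_mset[of M] by (simp add: multisets_of_size_def)
  qed
  then have "partitions_in A m \<subseteq> (\<Union>k\<le>m. multisets_of_size {1..m} k)"
    by blast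
  then show ?thesis by (rule finite_subset) (simp add: finite_multisets_of_size)
qed

lemma partitions_in_insert_not_member:
  "a \<notin> B \<Longrightarrow> {M \<in> partitions_in (insert a B) m. a \<notin># M} = partitions_in B m"
  by (auto simp: partitions_in_def)

lemma partitions_in_member:
  assumes "a \<in> A" "a \<le> m"
  shows "{M \<in> partitions_in A m. a \<in># M} = add_mset a ` partitions_in A (m - a)"
proof (intro equalityI subsetI)
  fix M assume "M \<in> {M \<in> partitions_in A m. a \<in># M}"
  then have "a \<in># M" "set_mset M \<subseteq> A" "sum_mset M = m" by (auto simp: partitions_in_def)
  moreover from \<open>a \<in># M\<close> have "sum_mset M = a + sum_mset (M - {#a#})" by (rule sum_mset.remove)
  ultimately have "M = add_mset a (M - {#a#})" "M - {#a#} \<in> partitions_in A (m - a)"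
    unfolding partitions_in_def by (auto dest: in_diffD)
  then show "M \<in> add_mset a ` partitions_in A (m - a)" by blast
qed (use assms in \<open>auto simp: partitions_in_def\<close>)

lemma partitions_in_member_empty: "m < a \<Longrightarrow> {M \<in> partitions_in A m. a \<in># M} = {}"
  by (auto simp: partitions_in_def dest: member_le_sum_mset)

lemma sum_partitions_in_insert:
  assumes "0 \<notin> insert a B" "a \<notin> B"
  shows "(\<Sum>M\<in>partitions_in (insert a B) m. f M) = (\<Sum>M\<in>partitions_in B m. f M)
           + (if m < a then 0 else (\<Sum>M\<in>partitions_in (insert a B) (m - a). f (add_mset a M)))"
proof -
  let ?P = "partitions_in (insert a B) m"
  have "finite ?P" using assms(1) by (rule finite_partitions_in)
  have "(\<Sum>M\<in>?P. f M) = (\<Sum>M\<in>{M\<in>?P. a \<notin># M} \<union> {M\<in>?P. a \<in># M}. f M)"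
    by (rule sum.cong) auto
  also have "\<dots> = (\<Sum>M\<in>{M\<in>?P. a \<notin># M}. f M) + (\<Sum>M\<in>{M\<in>?P. a \<in># M}. f M)"
    using \<open>finite ?P\<close> by (intro sum.union_disjoint) auto
  also have "(\<Sum>M\<in>{M\<in>?P. a \<notin># M}. f M) = (\<Sum>M\<in>partitions_in B m. f M)"
    by (simp only: partitions_in_insert_not_member[OF assms(2)])
  also have "(\<Sum>M\<in>{M\<in>?P. a \<in># M}. f M)
      = (if m < a then 0 else (\<Sum>M\<in>partitions_in (insert a B) (m - a). f (add_mset a M)))"
    by (simp add: partitions_in_member partitions_in_member_empty sum.reindex inj_on_def)
  finally show ?thesis .
qed

lemma Np_insert:
  assumes "0 \<notin> insert a B" "a \<notin> B"
  shows "Np (insert a B) m = Np B m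
           + (if m < a then 0 else Np (insert a B) (m - a) + card (partitions_in (insert a B) (m - a)))"
proof -
  have "Np (insert a B) m
      = Np B m + (if m < a then 0 else (\<Sum>M\<in>partitions_in (insert a B) (m - a). Suc (size M)))"
    unfolding Np_def by (subst sum_partitions_in_insert[OF assms]) simp
  then show ?thesis by (simp add: sum_Suc Np_def)
qed

lemma card_partitions_in_insert:
  assumes "0 \<notin> insert a B" "a \<notin> B"
  shows "card (partitions_in (insert a B) m) = card (partitions_in B m)
           + (if m < a then 0 else card (partitions_in (insert a B) (m - a)))"
proof -
  have "card (partitions_in (insert a B) m) = (\<Sum>M\<in>partitions_in (insert a B) m. 1)"
    by simp
  also have "\<dots> = (\<Sum>M\<in>partitions_in B m. 1)
      + (if m < a then 0 else (\<Sum>M\<in>partitions_in (insert a B) (m - a). 1))"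
    by (rule sum_partitions_in_insert[OF assms])
  finally show ?thesis by simp
qed

lemma partitions_in_0: "0 \<notin> A \<Longrightarrow> partitions_in A 0 = {{#}}"
  by (auto simp: partitions_in_def) (metis set_mset_eq_empty_iff subset_empty subset_iff)

lemma Np_0: "0 \<notin> A \<Longrightarrow> Np A 0 = 0"
  by (simp add: Np_def partitions_in_0)

lemma finite_distinct_partitions_in: "finite (distinct_partitions_in A m)"
proof (rule finite_subset)
  show "distinct_partitions_in A m \<subseteq> Pow {..m}"
    using member_le_sum[of _ _ "\<lambda>x. x"] by (fastforce simp: distinct_partitions_in_def)
qed simp

definition signed_distinct_partitions :: "nat set \<Rightarrow> nat \<Rightarrow> int" where
  "signed_distinct_partitions A m = (\<Sum>S\<in>distinct_partitions_in A m. (-1) ^ card S)"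

lemma signed_distinct_partitions_eq_qe_minus_qo:
  "signed_distinct_partitions A m = int (qe A m) - int (qo A m)"
proof -
  let ?D = "distinct_partitions_in A m"
  have "signed_distinct_partitions A m = (\<Sum>S\<in>?D. if even (card S) then 1 else - 1)"
    unfolding signed_distinct_partitions_def by (rule sum.cong) auto
  also have "\<dots> = int (card {S\<in>?D. even (card S)}) - int (card {S\<in>?D. odd (card S)})"
    using finite_distinct_partitions_in[of A m] by (simp add: sum.If_cases sum_negf Int_def)
  finally show ?thesis by (simp add: qe_def qo_def)
qed

lemma distinct_partitions_in_insert_not_member:
  "a \<notin> B \<Longrightarrow> {S \<in> distinct_partitions_in (insert a B) m. a \<notin> S} = distinct_partitions_in B m"
  by (auto simp: distinct_partitions_in_def)

lemma distinct_partitions_in_insert_member: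
  assumes "a \<notin> B" "a \<le> m"
  shows "{S \<in> distinct_partitions_in (insert a B) m. a \<in> S} = insert a ` distinct_partitions_in B (m - a)"
proof (intro equalityI subsetI)
  fix S assume "S \<in> {S \<in> distinct_partitions_in (insert a B) m. a \<in> S}"
  then have "finite S" "a \<in> S" "S \<subseteq> insert a B" "\<Sum>S = m"
    by (auto simp: distinct_partitions_in_def)
  then have "S = insert a (S - {a})" "S - {a} \<in> distinct_partitions_in B (m - a)"
    by (auto simp: distinct_partitions_in_def sum.remove)
  then show "S \<in> insert a ` distinct_partitions_in B (m - a)" by blast
next
  fix S assume "S \<in> insert a ` distinct_partitions_in B (m - a)"
  then obtain T where "S = insert a T" "finite T" "T \<subseteq> B" "\<Sum>T = m - a"
    by (auto simp: distinct_partitions_in_def)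
  moreover have "a \<notin> T" using \<open>T \<subseteq> B\<close> assms(1) by blast
  ultimately show "S \<in> {S \<in> distinct_partitions_in (insert a B) m. a \<in> S}"
    using assms(2) by (auto simp: distinct_partitions_in_def)
qed

lemma distinct_partitions_in_member_empty:
  "m < a \<Longrightarrow> {S \<in> distinct_partitions_in A m. a \<in> S} = {}"
  using member_le_sum[of a _ "\<lambda>x. x"] by (fastforce simp: distinct_partitions_in_def)

lemma signed_distinct_partitions_insert:
  assumes "a \<notin> B"
  shows "signed_distinct_partitions (insert a B) m
           = signed_distinct_partitions B m - (if m < a then 0 else signed_distinct_partitions B (m - a))"
proof -
  let ?D = "distinct_partitions_in (insert a B) m"
  have "(\<Sum>S\<in>?D. (-1::int) ^ card S) = (\<Sum>S\<in>{S\<in>?D. a \<notin> S} \<union> {S\<in>?D. a \<in> S}. (-1) ^ card S)"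
    by (rule sum.cong) auto
  also have "\<dots> = (\<Sum>S\<in>{S\<in>?D. a \<notin> S}. (-1) ^ card S) + (\<Sum>S\<in>{S\<in>?D. a \<in> S}. (-1) ^ card S)"
    using finite_distinct_partitions_in[of "insert a B" m] by (intro sum.union_disjoint) auto
  also have "(\<Sum>S\<in>{S\<in>?D. a \<notin> S}. (-1) ^ card S) = signed_distinct_partitions B m"
    by (simp only: distinct_partitions_in_insert_not_member[OF assms] signed_distinct_partitions_def)
  also have "(\<Sum>S\<in>{S\<in>?D. a \<in> S}. (-1::int) ^ card S)
      = - (if m < a then 0 else signed_distinct_partitions B (m - a))"
  proof (cases "m < a")
    case False
    have a_notin: "a \<notin> T" "finite T" if "T \<in> distinct_partitions_in B (m - a)" for T
      using that assms by (auto simp: distinct_partitions_in_def)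
    have "inj_on (insert a) (distinct_partitions_in B (m - a))"
      by (rule inj_onI) (metis a_notin(1) insert_ident)
    with False have "(\<Sum>S\<in>{S\<in>?D. a \<in> S}. (-1::int) ^ card S)
        = (\<Sum>T\<in>distinct_partitions_in B (m - a). (-1) ^ card (insert a T))"
      by (simp add: distinct_partitions_in_insert_member[OF assms] sum.reindex)
    also have "\<dots> = (\<Sum>T\<in>distinct_partitions_in B (m - a). - ((-1) ^ card T))"
      by (rule sum.cong) (simp_all add: a_notin)
    finally show ?thesis
      using False by (simp add: sum_negf signed_distinct_partitions_def)
  qed (simp add: distinct_partitions_in_member_empty)
  finally show ?thesis by (simp add: signed_distinct_partitions_def)
qed

definition partition_fps :: "nat set \<Rightarrow> int fps" where
  "partition_fps A = Abs_fps (\<lambda>m. int (card (partitions_in A m)))"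

definition Np_fps :: "nat set \<Rightarrow> int fps" where
  "Np_fps A = Abs_fps (\<lambda>m. int (Np A m))"

definition signed_distinct_partition_fps :: "nat set \<Rightarrow> int fps" where
  "signed_distinct_partition_fps A = Abs_fps (signed_distinct_partitions A)"

definition divisor_count_fps :: "nat set \<Rightarrow> int fps" where
  "divisor_count_fps A = Abs_fps (\<lambda>m. if m = 0 then 0 else int (card {a \<in> A. a dvd m}))"

lemma partition_fps_insert:
  assumes "0 \<notin> insert a B" "a \<notin> B"
  shows "partition_fps (insert a B) * (1 - fps_X ^ a) = partition_fps B"
proof -
  have "partition_fps (insert a B) = partition_fps B + fps_X ^ a * partition_fps (insert a B)"
    by (rule fps_ext)
      (simp add: partition_fps_def fps_X_power_mult_nth card_partitions_in_insert[OF assms])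
  then show ?thesis by (simp add: algebra_simps)
qed

lemma Np_fps_insert:
  assumes "0 \<notin> insert a B" "a \<notin> B"
  shows "Np_fps (insert a B) * (1 - fps_X ^ a) = Np_fps B + fps_X ^ a * partition_fps (insert a B)"
proof -
  have "Np_fps (insert a B) = Np_fps B + fps_X ^ a * (Np_fps (insert a B) + partition_fps (insert a B))"
    by (rule fps_ext) (simp add: Np_fps_def partition_fps_def fps_X_power_mult_nth Np_insert[OF assms])
  then show ?thesis by (simp add: algebra_simps)
qed

lemma signed_distinct_partition_fps_insert:
  assumes "a \<notin> B"
  shows "signed_distinct_partition_fps (insert a B) = signed_distinct_partition_fps B * (1 - fps_X ^ a)"
proof -
  have "signed_distinct_partition_fps (insert a B)
      = signed_distinct_partition_fps B - fps_X ^ a * signed_distinct_partition_fps B"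
    by (rule fps_ext) (simp add: signed_distinct_partition_fps_def fps_X_power_mult_nth
        signed_distinct_partitions_insert[OF assms])
  then show ?thesis by (simp add: algebra_simps)
qed

lemma divisor_count_fps_insert:
  assumes "a \<notin> B" "0 < a"
  shows "(divisor_count_fps (insert a B) - divisor_count_fps B) * (1 - fps_X ^ a) = fps_X ^ a"
proof -
  define d where "d = divisor_count_fps (insert a B) - divisor_count_fps B"
  have d_nth: "fps_nth d m = (if m \<noteq> 0 \<and> a dvd m then 1 else 0)" for m
  proof -
    have "{b \<in> insert a B. b dvd m} = (if a dvd m then insert a else id) {b \<in> B. b dvd m}"
      by auto
    then show ?thesis using assms(1) by (simp add: d_def divisor_count_fps_def)
  qed
  have "fps_nth d m - (if m < a then 0 else fps_nth d (m - a)) = (if m = a then 1 else 0)" for m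
  proof (cases "m < a")
    case True
    then show ?thesis using assms(2) by (auto simp: d_nth dest: dvd_imp_le)
  next
    case False
    then have "a dvd m \<longleftrightarrow> a dvd (m - a)" by (simp add: dvd_minus_self)
    with False show ?thesis using assms(2) by (auto simp: d_nth)
  qed
  then have "d - fps_X ^ a * d = fps_X ^ a"
    by (intro fps_ext) (simp add: fps_X_power_mult_nth)
  then show ?thesis by (simp add: d_def algebra_simps)
qed

lemma partition_fps_mult_signed_distinct_partition_fps:
  "finite B \<Longrightarrow> 0 \<notin> B \<Longrightarrow> partition_fps B * signed_distinct_partition_fps B = 1"
proof (induction B rule: finite_induct)
  case empty
  have "partitions_in {} m = (if m = 0 then {{#}} else {})" for m
    by (auto simp: partitions_in_def)
  moreover have "distinct_partitions_in {} m = (if m = 0 then {{}} else {})" for m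
    by (auto simp: distinct_partitions_in_def)
  ultimately have "partition_fps {} = 1" "signed_distinct_partition_fps {} = 1"
    by (auto intro!: fps_ext simp: partition_fps_def signed_distinct_partition_fps_def
        signed_distinct_partitions_def)
  then show ?case by simp
next
  case (insert a B)
  then have "partition_fps (insert a B) * signed_distinct_partition_fps (insert a B)
      = (partition_fps (insert a B) * (1 - fps_X ^ a)) * signed_distinct_partition_fps B"
    by (simp add: signed_distinct_partition_fps_insert mult_ac)
  also have "\<dots> = 1"
    using insert by (simp add: partition_fps_insert)
  finally show ?case .
qed

lemma Np_fps_mult_signed_distinct_partition_fps:
  "finite B \<Longrightarrow> 0 \<notin> B \<Longrightarrow> Np_fps B * signed_distinct_partition_fps B = divisor_count_fps B"
proof (induction B rule: finite_induct)
  case empty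
  have "Np_fps {} = 0" "divisor_count_fps {} = 0"
    by (auto intro!: fps_ext simp: Np_fps_def Np_def partitions_in_def divisor_count_fps_def)
  then show ?case by simp
next
  case (insert a B)
  let ?P' = "partition_fps (insert a B)" and ?D = "signed_distinct_partition_fps B"
    and ?T = "divisor_count_fps B" and ?T' = "divisor_count_fps (insert a B)"
  have "a > 0" using insert.prems by (auto intro: gr0I)
  have inverse: "(1 - fps_X ^ a) * (?P' * ?D) = 1"
    using partition_fps_mult_signed_distinct_partition_fps[of "insert a B"] insert
    by (simp add: signed_distinct_partition_fps_insert mult_ac)
  have "Np_fps (insert a B) * signed_distinct_partition_fps (insert a B)
      = (Np_fps (insert a B) * (1 - fps_X ^ a)) * ?D"
    by (simp add: signed_distinct_partition_fps_insert insert.hyps mult_ac)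
  also have "\<dots> = ?T + fps_X ^ a * (?P' * ?D)"
    using insert by (simp add: Np_fps_insert distrib_right mult.assoc)
  also have "\<dots> = ?T + (?T' - ?T) * ((1 - fps_X ^ a) * (?P' * ?D))"
    using divisor_count_fps_insert[OF insert.hyps(2) \<open>a > 0\<close>] by (simp add: mult.assoc)
  also have "\<dots> = ?T'"
    by (simp add: inverse)
  finally show ?case .
qed

lemma Np_Int_atMost: "k \<le> n \<Longrightarrow> Np (A \<inter> {..n}) k = Np A k"
proof -
  assume "k \<le> n"
  then have "partitions_in (A \<inter> {..n}) k = partitions_in A k"
    by (auto simp: partitions_in_def dest: member_le_sum_mset)
  then show ?thesis by (simp add: Np_def)
qed

lemma signed_distinct_partitions_Int_atMost:
  "k \<le> n \<Longrightarrow> signed_distinct_partitions (A \<inter> {..n}) k = signed_distinct_partitions A k"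
proof -
  assume "k \<le> n"
  then have "distinct_partitions_in (A \<inter> {..n}) k = distinct_partitions_in A k"
    using member_le_sum[of _ _ "\<lambda>x. x"] by (fastforce simp: distinct_partitions_in_def)
  then show ?thesis by (simp add: signed_distinct_partitions_def)
qed

theorem sum_Np_mult_qe_minus_qo:
  assumes "0 \<notin> A" "n > 0"
  shows "(\<Sum>k=1..n. int (Np A k) * (int (qe A (n - k)) - int (qo A (n - k))))
         = int (card {a \<in> A. a dvd n})"
proof -
  define B where "B = A \<inter> {..n}"
  have "finite B" "0 \<notin> B" using assms(1) by (auto simp: B_def)
  have "(\<Sum>k=1..n. int (Np A k) * (int (qe A (n - k)) - int (qo A (n - k))))
      = (\<Sum>k=1..n. int (Np B k) * signed_distinct_partitions B (n - k))"
    by (intro sum.cong) (simp_all add: B_def Np_Int_atMost signed_distinct_partitions_Int_atMost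
        flip: signed_distinct_partitions_eq_qe_minus_qo)
  also have "\<dots> = (\<Sum>k=0..n. int (Np B k) * signed_distinct_partitions B (n - k))"
    by (simp add: sum.atLeast_Suc_atMost Np_0[OF \<open>0 \<notin> B\<close>])
  also have "\<dots> = fps_nth (Np_fps B * signed_distinct_partition_fps B) n"
    by (simp add: fps_mult_nth Np_fps_def signed_distinct_partition_fps_def)
  also have "\<dots> = int (card {b \<in> B. b dvd n})"
    using Np_fps_mult_signed_distinct_partition_fps[OF \<open>finite B\<close> \<open>0 \<notin> B\<close>] assms(2)
    by (simp add: divisor_count_fps_def)
  also have "{b \<in> B. b dvd n} = {a \<in> A. a dvd n}"
    using assms(2) by (auto simp: B_def dest: dvd_imp_le)
  finally show ?thesis .
qed

theorem corollary6:
  fixes n :: nat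
  assumes "n > 0"
  shows "(\<Sum>k=1..n. int (Np {p. prime p} k) *
            (int (qe {p. prime p} (n - k)) - int (qo {p. prime p} (n - k))))
         = int (card (prime_factors n))"
proof -
  have "prime_factors n = {p \<in> {p. prime p}. p dvd n}"
    using assms by (auto simp: prime_factors_dvd)
  then show ?thesis
    using sum_Np_mult_qe_minus_qo[of "{p. prime p}" n] assms by simp
qed

end
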